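(* Let $f:X\to S$ be a morphism of fine log schemes of characteristic $p$. If $D=(\delta,\partial):(\mathcal M_X,\mathcal O_X)\to\mathcal O_X$ is a log derivation over $S$, then so is $D^{(p)}:=(\partial^{p-1}\circ\delta+F_X^*\circ\delta,\ \partial^{(p)})$.
   Context: A log derivation of $X$ over $S$ is a pair $(\delta,\partial)$ with $\partial:\mathcal O_X\to\mathcal O_X$ an $\mathcal O_S$-linear derivation and $\delta:\mathcal M_X\to\mathcal O_X$ a monoid homomorphism (to the additive group) vanishing on the image of $f^{-1}\mathcal M_S$ and satisfying $\partial(\alpha(m))=\alpha(m)\delta(m)$ for $m\in\mathcal M_X$. Here $\partial^{(p)}:=\partial^p$ (the $p$-fold iterate), $\partial^{p-1}\circ\delta$ is $m\mapsto\partial^{p-1}(\delta(m))$, and $F_X^*\circ\delta$ is $m\mapsto\delta(m)^p$. *)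

theory Defs
  imports Main "HOL-Computational_Algebra.Primes"
begin

text \<open>Local (section-level) model of a morphism of log schemes f : X \<rightarrow> S.
  'a : the ring of sections of O_X, 'b : sections of O_S, phi : f-sharp : O_S \<rightarrow> O_X,
  'm : sections of M_X (written multiplicatively), alpha : M_X \<rightarrow> O_X the structure map,
  'n : sections of M_S, beta : M_S \<rightarrow> M_X the induced map, alphaS : M_S \<rightarrow> O_S.\<close>

definition is_log_structure :: "('m::comm_monoid_mult \<Rightarrow> 'a::comm_ring_1) \<Rightarrow> bool" where
  "is_log_structure alpha \<longleftrightarrow>
     alpha 1 = 1 \<and> (\<forall>m n. alpha (m * n) = alpha m * alpha n) \<and>
     bij_betw alpha {m. alpha m dvd 1} {u. u dvd 1}"

definition log_morphism_data ::
  "('b::comm_ring_1 \<Rightarrow> 'a::comm_ring_1) \<Rightarrow> ('m::comm_monoid_mult \<Rightarrow> 'a) \<Rightarrow>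
   ('n::comm_monoid_mult \<Rightarrow> 'b) \<Rightarrow> ('n \<Rightarrow> 'm) \<Rightarrow> bool" where
  "log_morphism_data phi alpha alphaS beta \<longleftrightarrow>
     phi 1 = 1 \<and> (\<forall>x y. phi (x + y) = phi x + phi y) \<and> (\<forall>x y. phi (x * y) = phi x * phi y) \<and>
     is_log_structure alpha \<and> is_log_structure alphaS \<and>
     beta 1 = 1 \<and> (\<forall>m n. beta (m * n) = beta m * beta n) \<and>
     (\<forall>n. alpha (beta n) = phi (alphaS n))"

definition log_derivation ::
  "('b::comm_ring_1 \<Rightarrow> 'a::comm_ring_1) \<Rightarrow> ('m::comm_monoid_mult \<Rightarrow> 'a) \<Rightarrow>
   ('n::comm_monoid_mult \<Rightarrow> 'm) \<Rightarrow> ('m \<Rightarrow> 'a) \<Rightarrow> ('a \<Rightarrow> 'a) \<Rightarrow> bool" where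
  "log_derivation phi alpha beta delta D \<longleftrightarrow>
     (\<forall>x y. D (x + y) = D x + D y) \<and>
     (\<forall>b x. D (phi b * x) = phi b * D x) \<and>
     (\<forall>x y. D (x * y) = x * D y + y * D x) \<and>
     delta 1 = 0 \<and> (\<forall>m n. delta (m * n) = delta m + delta n) \<and>
     (\<forall>n. delta (beta n) = 0) \<and>
     (\<forall>m. D (alpha m) = alpha m * delta m)"

end

(*
  D^p is again a derivation because the binomial coefficients (p choose k), 0 < k < p, vanish
  in the Leibniz rule, and delta^p is additive because p-th powers are. The real content is
  Hochschild's formula: D a = a u implies D^p a = a (D^(p-1) u + u^p).
  Put Q_n = (D + t u)^n (1) in A[[t]], with D acting on coefficients. Then D^n a = a Q_n(1),
  and d/dt commutes with D + t u up to multiplication by u, which yields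
  d/dt Q_n = sum_k (n choose k+1) D^k(u) Q_(n-k-1). For n = p only D^(p-1)(u) survives, so the
  coefficient c_j of t^j in Q_p satisfies j c_j = 0 for 1 < j < p, hence c_j = 0; moreover
  c_0 = D^p(1) = 0, c_1 = D^(p-1)(u) and c_p = u^p.
*)

theory Submission
  imports Defs "HOL-Computational_Algebra.Formal_Power_Series"
begin

unbundle fps_syntax

lemma of_nat_prime_choose_eq_0:
  assumes "prime p" "of_nat p = (0::'a::semiring_1)" "0 < k" "k < p"
  shows "of_nat (p choose k) = (0::'a)"
proof -
  have "p dvd p choose k"
    using assms by (intro dvd_choose_prime) auto
  then show ?thesis
    using assms(2) by (auto elim: dvdE)
qed

lemma add_power_prime_char:
  fixes x y :: "'a::comm_semiring_1"
  assumes "prime p" "of_nat p = (0::'a)"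
  shows "(x + y) ^ p = x ^ p + y ^ p"
proof -
  have "(x + y) ^ p = (\<Sum>k\<in>{0, p}. of_nat (p choose k) * x ^ k * y ^ (p - k))"
    unfolding binomial_ring
  proof (rule sum.mono_neutral_right)
    show "\<forall>k\<in>{..p} - {0, p}. of_nat (p choose k) * x ^ k * y ^ (p - k) = 0"
      using assms by (auto simp: of_nat_prime_choose_eq_0)
  qed auto
  then show ?thesis
    using assms(1) by (simp add: prime_gt_0_nat add.commute)
qed

lemma of_nat_mult_eq_0_prime_char:
  fixes x :: "'a::comm_semiring_1"
  assumes "prime p" "of_nat p = (0::'a)" "0 < k" "k < p" and "of_nat k * x = 0"
  shows "x = 0"
proof -
  have "coprime p k"
    using assms(1,3,4) by (intro prime_imp_coprime) (auto dest: dvd_imp_le)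
  then obtain a b where "k * a = p * b + 1"
    using bezout_nat[of k p] assms(3) by (auto simp: coprime_commute)
  then have "of_nat a * of_nat k = (1::'a)"
    using assms(2) by (metis mult.commute of_nat_1 of_nat_add of_nat_mult mult_zero_left add_0)
  then show ?thesis
    using assms(5) by (metis mult.assoc mult_1 mult_zero_right)
qed

lemma sum_choose_Suc:
  fixes F :: "nat \<Rightarrow> 'a::comm_semiring_1"
  shows "(\<Sum>k\<le>Suc n. of_nat (Suc n choose k) * F k) = (\<Sum>k\<le>n. of_nat (n choose k) * (F k + F (Suc k)))"
proof -
  have "(\<Sum>k\<le>n. of_nat (n choose k) * F k) = (\<Sum>k\<le>Suc n. of_nat (n choose k) * F k)"
    by (simp add: binomial_eq_0)
  also have "\<dots> = F 0 + (\<Sum>k\<le>n. of_nat (n choose Suc k) * F (Suc k))"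
    by (subst sum.atMost_Suc_shift) simp
  finally show ?thesis
    by (subst sum.atMost_Suc_shift) (simp add: sum.distrib distrib_left distrib_right add_ac)
qed

lemma funpow_mult_left_commute:
  assumes "\<And>x. f (c * x) = c * f x"
  shows "(f ^^ n) (c * x) = c * (f ^^ n) x"
  by (induction n) (simp_all add: assms)

locale derivation =
  fixes D :: "'a::comm_ring_1 \<Rightarrow> 'a"
  assumes add: "D (x + y) = D x + D y"
    and mult: "D (x * y) = x * D y + y * D x"
begin

lemma zero [simp]: "D 0 = 0"
  using add[of 0 0] by simp

lemma one [simp]: "D 1 = 0"
  using mult[of 1 1] by simp

lemma sum: "D (\<Sum>k\<in>A. f k) = (\<Sum>k\<in>A. D (f k))"
  by (induction A rule: infinite_finite_induct) (simp_all add: add)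

lemma of_nat_mult: "D (of_nat k * x) = of_nat k * D x"
  by (induction k) (simp_all add: add distrib_right)

lemma of_nat [simp]: "D (of_nat k) = 0"
  using of_nat_mult[of k 1] by simp

lemma funpow_zero [simp]: "(D ^^ n) 0 = 0"
  by (induction n) simp_all

lemma funpow_add: "(D ^^ n) (x + y) = (D ^^ n) x + (D ^^ n) y"
  by (induction n) (simp_all add: add)

lemma funpow_mult:
  "(D ^^ n) (x * y) = (\<Sum>k\<le>n. of_nat (n choose k) * ((D ^^ k) x * (D ^^ (n - k)) y))"
proof (induction n)
  case 0
  show ?case by simp
next
  case (Suc n)
  have "(D ^^ Suc n) (x * y) = (\<Sum>k\<le>n. of_nat (n choose k) *
      ((D ^^ k) x * (D ^^ (Suc n - k)) y + (D ^^ Suc k) x * (D ^^ (Suc n - Suc k)) y))"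
    by (simp add: Suc sum of_nat_mult mult Suc_diff_le algebra_simps)
  then show ?case
    by (simp only: sum_choose_Suc)
qed

text \<open>Power series rather than polynomials: the polynomial derivative pderiv is only available
  over rings without zero divisors, and A typically has nilpotents.\<close>

definition twisted :: "'a \<Rightarrow> 'a fps \<Rightarrow> 'a fps" where
  "twisted u f = Abs_fps (\<lambda>i. D (f $ i)) + fps_const u * fps_X * f"

definition twisted_iterate :: "'a \<Rightarrow> nat \<Rightarrow> 'a fps" where
  "twisted_iterate u n = (twisted u ^^ n) 1"

lemma twisted_nth_0 [simp]: "twisted u f $ 0 = D (f $ 0)"
  by (simp add: twisted_def)

lemma twisted_nth_Suc [simp]: "twisted u f $ Suc j = D (f $ Suc j) + u * f $ j"
  by (simp add: twisted_def mult.assoc)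

lemma twisted_add: "twisted u (f + g) = twisted u f + twisted u g"
  by (rule fps_ext, case_tac n) (simp_all add: add algebra_simps)

lemma twisted_0 [simp]: "twisted u 0 = 0"
  by (rule fps_ext, case_tac n) simp_all

lemma twisted_sum: "twisted u (\<Sum>k\<in>A. f k) = (\<Sum>k\<in>A. twisted u (f k))"
  by (induction A rule: infinite_finite_induct) (simp_all add: twisted_add)

lemma twisted_const_mult:
  "twisted u (fps_const c * f) = fps_const (D c) * f + fps_const c * twisted u f"
  by (rule fps_ext, case_tac n) (simp_all add: mult algebra_simps)

lemma fps_deriv_twisted: "fps_deriv (twisted u f) = twisted u (fps_deriv f) + fps_const u * f"
proof -
  have "fps_deriv (Abs_fps (\<lambda>i. D (f $ i))) = Abs_fps (\<lambda>i. D (fps_deriv f $ i))"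
    by (simp add: fps_eq_iff of_nat_mult del: of_nat_Suc)
  then show ?thesis
    by (simp add: twisted_def algebra_simps)
qed

lemma twisted_iterate_0 [simp]: "twisted_iterate u 0 = 1"
  by (simp add: twisted_iterate_def)

lemma twisted_iterate_Suc [simp]: "twisted_iterate u (Suc n) = twisted u (twisted_iterate u n)"
  by (simp add: twisted_iterate_def)

lemma twisted_iterate_nth_above: "n < j \<Longrightarrow> twisted_iterate u n $ j = 0"
proof (induction n arbitrary: j)
  case (Suc n)
  then show ?case by (cases j) simp_all
qed simp

lemma twisted_iterate_nth_0: "0 < n \<Longrightarrow> twisted_iterate u n $ 0 = 0"
proof (induction n)
  case (Suc n)
  then show ?case by (cases n) simp_all
qed simp

lemma twisted_iterate_nth_diag: "twisted_iterate u n $ n = u ^ n"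
  by (induction n) (simp_all add: twisted_iterate_nth_above)

lemma funpow_eq_twisted_iterate:
  assumes "D a = a * u"
  shows "(D ^^ n) a = a * (\<Sum>j\<le>n. twisted_iterate u n $ j)"
proof (induction n)
  case 0
  show ?case by simp
next
  case (Suc n)
  let ?Q = "twisted_iterate u n"
  have "(\<Sum>j\<le>Suc n. twisted_iterate u (Suc n) $ j)
      = D (?Q $ 0) + (\<Sum>j\<le>n. D (?Q $ Suc j) + u * ?Q $ j)"
    by (simp only: sum.atMost_Suc_shift twisted_iterate_Suc twisted_nth_0 twisted_nth_Suc)
  also have "D (?Q $ 0) + (\<Sum>j\<le>n. D (?Q $ Suc j)) = (\<Sum>j\<le>n. D (?Q $ j))"
    using sum.atMost_Suc_shift[of "\<lambda>j. D (?Q $ j)" n] by (simp add: twisted_iterate_nth_above)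
  then have "D (?Q $ 0) + (\<Sum>j\<le>n. D (?Q $ Suc j) + u * ?Q $ j)
      = D (\<Sum>j\<le>n. ?Q $ j) + u * (\<Sum>j\<le>n. ?Q $ j)"
    by (simp add: sum sum.distrib sum_distrib_left add.assoc)
  finally show ?case
    using Suc assms by (simp add: mult algebra_simps)
qed

lemma fps_deriv_twisted_iterate:
  "fps_deriv (twisted_iterate u n) =
     (\<Sum>k<n. fps_const (of_nat (n choose Suc k) * (D ^^ k) u) * twisted_iterate u (n - Suc k))"
proof (induction n)
  case 0
  show ?case by simp
next
  case (Suc n)
  let ?G = "\<lambda>m k. fps_const (of_nat (n choose m) * (D ^^ k) u) * twisted_iterate u (n - k)"
  have "twisted u (fps_const (of_nat (n choose Suc k) * (D ^^ k) u) * twisted_iterate u (n - Suc k))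
      = ?G (Suc k) (Suc k) + ?G (Suc k) k" if "k < n" for k
  proof -
    have "n - k = Suc (n - Suc k)"
      using that by simp
    then show ?thesis
      by (simp add: twisted_const_mult of_nat_mult distrib_right)
  qed
  then have "fps_deriv (twisted_iterate u (Suc n))
      = (\<Sum>k<n. ?G (Suc k) (Suc k)) + ?G 0 0 + (\<Sum>k<n. ?G (Suc k) k)"
    by (simp add: Suc fps_deriv_twisted twisted_sum sum.distrib)
  also have "\<dots> = (\<Sum>k<Suc n. ?G k k) + (\<Sum>k<Suc n. ?G (Suc k) k)"
    using sum.lessThan_Suc_shift[of "\<lambda>k. ?G k k" n] by (simp add: binomial_eq_0 add_ac)
  also have "\<dots> = (\<Sum>k<Suc n. fps_const (of_nat (Suc n choose Suc k) * (D ^^ k) u) * twisted_iterate u (n - k))"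
    by (simp add: sum.distrib[symmetric] distrib_right flip: fps_const_add)
  finally show ?case
    by simp
qed

end

locale prime_char_derivation = derivation D for D :: "'a::comm_ring_1 \<Rightarrow> 'a" +
  fixes p :: nat
  assumes prime: "prime p" and char: "of_nat p = (0::'a)"
begin

lemma funpow_prime_mult: "(D ^^ p) (x * y) = x * (D ^^ p) y + y * (D ^^ p) x"
proof -
  have "(D ^^ p) (x * y) = (\<Sum>k\<in>{0, p}. of_nat (p choose k) * ((D ^^ k) x * (D ^^ (p - k)) y))"
    unfolding funpow_mult
    using prime char by (intro sum.mono_neutral_right) (auto simp: of_nat_prime_choose_eq_0)
  then show ?thesis
    using prime by (simp add: prime_gt_0_nat mult.commute)
qed

lemma fps_deriv_twisted_iterate_prime:
  "fps_deriv (twisted_iterate u p) = fps_const ((D ^^ (p - 1)) u)"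
proof -
  have "fps_deriv (twisted_iterate u p) =
      (\<Sum>k\<in>{p - 1}. fps_const (of_nat (p choose Suc k) * (D ^^ k) u) * twisted_iterate u (p - Suc k))"
    unfolding fps_deriv_twisted_iterate
  proof (rule sum.mono_neutral_right)
    show "\<forall>k\<in>{..<p} - {p - 1}.
        fps_const (of_nat (p choose Suc k) * (D ^^ k) u) * twisted_iterate u (p - Suc k) = 0"
    proof
      fix k
      assume "k \<in> {..<p} - {p - 1}"
      then have "of_nat (p choose Suc k) = (0::'a)"
        using prime char by (intro of_nat_prime_choose_eq_0) auto
      then show "fps_const (of_nat (p choose Suc k) * (D ^^ k) u) * twisted_iterate u (p - Suc k) = 0"
        by simp
    qed
  qed (use prime prime_gt_0_nat in auto)
  then show ?thesis
    using prime by (simp add: prime_gt_0_nat)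
qed

lemma twisted_iterate_prime_nth:
  "twisted_iterate u p $ j = (if j = 1 then (D ^^ (p - 1)) u else 0) + (if j = p then u ^ p else 0)"
proof -
  have p2: "2 \<le> p"
    using prime prime_ge_2_nat by blast
  have deriv: "of_nat (Suc i) * twisted_iterate u p $ Suc i = (if i = 0 then (D ^^ (p - 1)) u else 0)" for i
    using arg_cong[OF fps_deriv_twisted_iterate_prime[of u], of "\<lambda>f. f $ i"] by simp
  consider "j = 0" | "j = 1" | "1 < j" "j < p" | "j = p" | "p < j"
    by linarith
  then show ?thesis
  proof cases
    case 1
    then show ?thesis using p2 by (simp add: twisted_iterate_nth_0)
  next
    case 2
    then show ?thesis using p2 deriv[of 0] by simp
  next
    case 3
    then obtain i where "j = Suc i" "0 < i"
      by (cases j) auto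
    then show ?thesis
      using 3 deriv[of i] prime char by (auto intro: of_nat_mult_eq_0_prime_char)
  next
    case 4
    then show ?thesis using p2 by (simp add: twisted_iterate_nth_diag)
  next
    case 5
    then show ?thesis using p2 by (simp add: twisted_iterate_nth_above)
  qed
qed

lemma hochschild_formula:
  assumes "D a = a * u"
  shows "(D ^^ p) a = a * ((D ^^ (p - 1)) u + u ^ p)"
proof -
  have "(\<Sum>j\<le>p. twisted_iterate u p $ j) = (D ^^ (p - 1)) u + u ^ p"
    using prime_ge_2_nat[OF prime] by (simp add: twisted_iterate_prime_nth sum.distrib)
  then show ?thesis
    using funpow_eq_twisted_iterate[OF assms] by simp
qed

end

theorem mainTheorem15:
  fixes p :: nat
    and phi :: "'b::comm_ring_1 \<Rightarrow> 'a::comm_ring_1"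
    and alpha :: "'m::comm_monoid_mult \<Rightarrow> 'a"
    and alphaS :: "'n::comm_monoid_mult \<Rightarrow> 'b"
    and beta :: "'n \<Rightarrow> 'm"
    and delta :: "'m \<Rightarrow> 'a"
    and D :: "'a \<Rightarrow> 'a"
  assumes "prime p"
    and "of_nat p = (0::'a)"
    and "of_nat p = (0::'b)"
    and "log_morphism_data phi alpha alphaS beta"
    and "log_derivation phi alpha beta delta D"
  shows "log_derivation phi alpha beta
           (\<lambda>m. (D ^^ (p - 1)) (delta m) + delta m ^ p) (D ^^ p)"
proof -
  note der = assms(5)[unfolded log_derivation_def]
  interpret prime_char_derivation D p
    using der assms(1,2) by unfold_locales auto
  have "0 < p"
    using assms(1) prime_gt_0_nat by blast
  show ?thesis
    unfolding log_derivation_def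
  proof (intro conjI allI)
    fix x y
    show "(D ^^ p) (x + y) = (D ^^ p) x + (D ^^ p) y"
      by (rule funpow_add)
    show "(D ^^ p) (x * y) = x * (D ^^ p) y + y * (D ^^ p) x"
      by (rule funpow_prime_mult)
  next
    fix b x
    show "(D ^^ p) (phi b * x) = phi b * (D ^^ p) x"
      using der by (intro funpow_mult_left_commute) auto
  next
    fix m n
    show "(D ^^ (p - 1)) (delta (m * n)) + delta (m * n) ^ p =
        (D ^^ (p - 1)) (delta m) + delta m ^ p + ((D ^^ (p - 1)) (delta n) + delta n ^ p)"
      using der assms(1,2) by (simp add: funpow_add add_power_prime_char algebra_simps)
  next
    fix m
    show "(D ^^ p) (alpha m) = alpha m * ((D ^^ (p - 1)) (delta m) + delta m ^ p)"
      using der by (intro hochschild_formula) auto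
  qed (use der \<open>0 < p\<close> in \<open>simp_all add: zero_power\<close>)
qed

end
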